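(* Let $p_{Y|X}p_X$ define a finite IB problem. The IB curve has a linear segment at $\beta=1$, i.e., there is a nondegenerate interval of $I_X$-values on which the IB curve $I_Y(I_X)$ is affine with slope $1/\beta=1$, if and only if the joint distribution $p_{Y|X}p_X$ decomposes.
   Context: $\mathcal{X},\mathcal{Y}$ are finite sets and $p(x,y)=p(y|x)p(x)$ is a joint distribution with $p(x)>0$. The IB curve is $I_Y(I_X):=\max\{I(Y;\hat X): I(X;\hat X)\le I_X\}$, the maximum taken over all random variables $\hat X$ on finite alphabets forming a Markov chain $Y\leftrightarrow X\leftrightarrow\hat X$ (i.e., over encoders $p(\hat x|x)$). A matrix decomposes if, after permuting its rows and columns, it can be written non-trivially as a block (diagonal) matrix with at least two blocks; here the matrix is the $|\mathcal{X}|\times|\mathcal{Y}|$ matrix $(p(y|x)p(x))_{x,y}$. *)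

theory Defs
  imports Complex_Main
begin

definition mutual_info :: "'a set \<Rightarrow> 'b set \<Rightarrow> ('a \<Rightarrow> 'b \<Rightarrow> real) \<Rightarrow> real" where
  "mutual_info A B J =
     (\<Sum>a\<in>A. \<Sum>b\<in>B. if J a b = 0 then 0
        else J a b * ln (J a b / ((\<Sum>b'\<in>B. J a b') * (\<Sum>a'\<in>A. J a' b))))"

text \<open>An encoder p(xhat|x): the alphabet of Xhat is the finite set {..<k} of naturals.\<close>
definition encoder :: "nat \<Rightarrow> ('x::finite \<Rightarrow> nat \<Rightarrow> real) \<Rightarrow> bool" where
  "encoder k q \<longleftrightarrow> (\<forall>x t. 0 \<le> q x t) \<and> (\<forall>x. (\<Sum>t<k. q x t) = 1)"

definition IXT :: "('x::finite \<Rightarrow> 'y::finite \<Rightarrow> real) \<Rightarrow> nat \<Rightarrow> ('x \<Rightarrow> nat \<Rightarrow> real) \<Rightarrow> real" where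
  "IXT p k q = mutual_info (UNIV::'x set) {..<k} (\<lambda>x t. (\<Sum>y\<in>UNIV. p x y) * q x t)"

text \<open>I(Y;Xhat) under the Markov chain Y -- X -- Xhat.\<close>
definition IYT :: "('x::finite \<Rightarrow> 'y::finite \<Rightarrow> real) \<Rightarrow> nat \<Rightarrow> ('x \<Rightarrow> nat \<Rightarrow> real) \<Rightarrow> real" where
  "IYT p k q = mutual_info (UNIV::'y set) {..<k} (\<lambda>y t. \<Sum>x\<in>UNIV. p x y * q x t)"

text \<open>The IB curve I_Y(I_X) = max { I(Y;Xhat) : I(X;Xhat) \<le> I_X } (written as Sup;
  the maximum is attained).\<close>
definition IB_curve :: "('x::finite \<Rightarrow> 'y::finite \<Rightarrow> real) \<Rightarrow> real \<Rightarrow> real" where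
  "IB_curve p IX = Sup {IYT p k q | k q. encoder k q \<and> IXT p k q \<le> IX}"

definition IB_problem :: "('x::finite \<Rightarrow> 'y::finite \<Rightarrow> real) \<Rightarrow> bool" where
  "IB_problem p \<longleftrightarrow> (\<forall>x y. 0 \<le> p x y) \<and> (\<Sum>x\<in>UNIV. \<Sum>y\<in>UNIV. p x y) = 1
     \<and> (\<forall>x. 0 < (\<Sum>y\<in>UNIV. p x y))"

text \<open>A matrix M (rows indexed by 'x, columns by 'y) decomposes: after permuting rows
  and columns it is block diagonal with at least two blocks, i.e. rows and columns split
  into nonempty proper parts A, B such that all entries outside A\<times>B and (-A)\<times>(-B) vanish.\<close>
definition decomposes :: "('x \<Rightarrow> 'y \<Rightarrow> real) \<Rightarrow> bool" where
  "decomposes M \<longleftrightarrow> (\<exists>A B. A \<noteq> {} \<and> A \<noteq> UNIV \<and> B \<noteq> {} \<and> B \<noteq> UNIV \<and>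
      (\<forall>x y. M x y \<noteq> 0 \<longrightarrow> (x \<in> A \<longleftrightarrow> y \<in> B)))"

definition has_linear_segment_beta1 :: "('x::finite \<Rightarrow> 'y::finite \<Rightarrow> real) \<Rightarrow> bool" where
  "has_linear_segment_beta1 p \<longleftrightarrow> (\<exists>a b. 0 \<le> a \<and> a < b \<and>
      (\<forall>IX\<in>{a..b}. IB_curve p IX = IB_curve p a + (IX - a)))"

end

theory Submission
  imports Defs
begin

(* Write I(X;T) and I(Y;T) as sums over the output symbols t of two 1-homogeneous
   functionals info_x, info_y of the column q(t|.).  The data processing inequality
   info_y <= info_x is an equality for indicators of unions of blocks of p.

   If p decomposes, the encoder revealing the block of x attains I(Y;T) = I(X;T) > 0, and
   mixing it with a constant output symbol traces the diagonal I_Y = I_X on an interval.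

   If p does not decompose, a strong data processing inequality info_y <= (1 - c) info_x
   holds: the gap info_x - info_y dominates the conditional variance of the column given
   Y (a Hellinger bound), which by connectivity of the support dominates its variance,
   which in turn dominates info_x (a chi-square bound).  Hence I_Y <= (1 - c) I_X on the
   whole curve.  But mixing with a constant output shows l I_Y(I_X) <= I_Y(l I_X), so a
   segment of slope 1 on [a, b] would force I_Y(b) >= b. *)

definition kl_term :: "real \<Rightarrow> real \<Rightarrow> real" where
  "kl_term u v = (if u = 0 then 0 else u * ln (u / v))"

lemma mutual_info_eq_kl_term:
  "mutual_info A B J = (\<Sum>a\<in>A. \<Sum>b\<in>B. kl_term (J a b) ((\<Sum>b'\<in>B. J a b') * (\<Sum>a'\<in>A. J a' b)))"
  by (simp add: mutual_info_def kl_term_def)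

lemma kl_term_same [simp]: "kl_term u u = 0"
  by (simp add: kl_term_def)

lemma kl_term_zero [simp]: "kl_term 0 v = 0"
  by (simp add: kl_term_def)

lemma kl_term_mult: "0 \<le> c \<Longrightarrow> kl_term (c * u) (c * v) = c * kl_term u v"
  by (cases "c = 0") (simp_all add: kl_term_def)

lemma kl_term_ge_diff:
  fixes u v :: real
  assumes "0 \<le> u" "0 \<le> v" "v = 0 \<Longrightarrow> u = 0"
  shows "u - v \<le> kl_term u v"
proof (cases "u = 0")
  case True
  then show ?thesis using assms by (auto simp: kl_term_def)
next
  case False
  then have "0 < u" "0 < v" using assms by (auto simp: less_le)
  then have "1 - v / u \<le> ln (u / v)"
    using ln_le_minus_one[of "v / u"] by (simp add: ln_div)
  then have "u * (1 - v / u) \<le> u * ln (u / v)"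
    using \<open>0 < u\<close> by (intro mult_left_mono) auto
  then show ?thesis using \<open>0 < u\<close> False by (simp add: kl_term_def right_diff_distrib)
qed

lemma kl_term_le_chi_square:
  fixes u v :: real
  assumes "0 \<le> u" "0 < v"
  shows "kl_term u v \<le> (u - v)\<^sup>2 / v + (u - v)"
proof -
  have "(u - v)\<^sup>2 / v + (u - v) = u * (u / v - 1)"
    using assms by (simp add: field_simps power2_eq_square)
  moreover have "u * ln (u / v) \<le> u * (u / v - 1)" if "0 < u"
    using that assms by (intro mult_left_mono ln_le_minus_one) auto
  ultimately show ?thesis
    using assms by (cases "u = 0") (auto simp: kl_term_def)
qed

(* The gain over kl_term_ge_diff is the squared Hellinger distance (sqrt u - sqrt v)^2,
   which is at least (u - v)^2 / (4 M) since (sqrt u + sqrt v)^2 <= 4 M. *)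
lemma kl_term_ge_diff_plus_square:
  fixes u v M :: real
  assumes "0 \<le> u" "0 \<le> v" "v = 0 \<Longrightarrow> u = 0" "u \<le> M" "v \<le> M"
  shows "u - v + (u - v)\<^sup>2 / (4 * M) \<le> kl_term u v"
proof (cases "u = 0")
  case True
  have "v\<^sup>2 \<le> 4 * M * v"
    using assms by (simp add: power2_eq_square mult_right_mono)
  then have "v\<^sup>2 / (4 * M) \<le> v"
    using assms by (cases "v = 0") (simp_all add: divide_le_eq mult.commute)
  then show ?thesis using True by simp
next
  case False
  then have u: "0 < u" and v: "0 < v" using assms by (auto simp: less_le)
  define s t where "s = sqrt u" and "t = sqrt v"
  have s: "0 < s" "u = s * s" and t: "0 < t" "v = t * t"
    using u v by (auto simp: s_def t_def)
  have "ln (u / v) = 2 * ln (s / t)"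
    using s t by (simp add: ln_div ln_mult)
  moreover have "2 * s * (s - t) \<le> 2 * s * (s * ln (s / t))"
    using kl_term_ge_diff[of s t] s t by (intro mult_left_mono) (auto simp: kl_term_def)
  moreover have "u - v + (s - t)\<^sup>2 = 2 * s * (s - t)"
    unfolding s(2) t(2) by (simp add: power2_eq_square algebra_simps)
  ultimately have hellinger: "u - v + (s - t)\<^sup>2 \<le> u * ln (u / v)"
    unfolding s(2) by (simp add: algebra_simps)
  have "(s + t)\<^sup>2 \<le> 2 * (u + v)"
    unfolding s(2) t(2) using zero_le_power2[of "s - t"] by (simp add: power2_eq_square algebra_simps)
  then have "(s - t)\<^sup>2 * (s + t)\<^sup>2 \<le> (s - t)\<^sup>2 * (4 * M)"
    using assms by (intro mult_left_mono) auto
  moreover have "(u - v)\<^sup>2 = (s - t)\<^sup>2 * (s + t)\<^sup>2"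
    unfolding s(2) t(2) by (simp add: power2_eq_square algebra_simps)
  ultimately have "(u - v)\<^sup>2 / (4 * M) \<le> (s - t)\<^sup>2"
    using u assms by (simp add: divide_le_eq)
  then show ?thesis using hellinger False by (simp add: kl_term_def)
qed

lemma not_decomposes_crossing_column:
  fixes M :: "'x \<Rightarrow> 'y \<Rightarrow> real"
  assumes nd: "\<not> decomposes M" and rows: "\<And>x. \<exists>y. M x y \<noteq> 0"
    and "S \<noteq> {}" "S \<noteq> UNIV"
  shows "\<exists>x x' y. x \<notin> S \<and> x' \<in> S \<and> M x y \<noteq> 0 \<and> M x' y \<noteq> 0"
proof -
  define B where "B = {y. \<exists>x'\<in>S. M x' y \<noteq> 0}"
  obtain x y where "x \<notin> S" "y \<in> B" "M x y \<noteq> 0"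
  proof (cases "B = UNIV")
    case True
    obtain x where "x \<notin> S" using \<open>S \<noteq> UNIV\<close> by blast
    moreover obtain y where "M x y \<noteq> 0" using rows by blast
    ultimately show thesis using that True by blast
  next
    case False
    have "B \<noteq> {}" using \<open>S \<noteq> {}\<close> rows by (force simp: B_def)
    then obtain x y where "M x y \<noteq> 0" "\<not> (x \<in> S \<longleftrightarrow> y \<in> B)"
      using nd False assms(3,4) unfolding decomposes_def by blast
    then show thesis using that by (auto simp: B_def)
  qed
  then show ?thesis by (auto simp: B_def)
qed

lemma not_decomposes_spread:
  fixes M :: "'x::finite \<Rightarrow> 'y \<Rightarrow> real" and a :: "'x \<Rightarrow> real"
  assumes nd: "\<not> decomposes M" and rows: "\<And>x. \<exists>y. M x y \<noteq> 0"
    and column_spread: "\<And>x x' y. M x y \<noteq> 0 \<Longrightarrow> M x' y \<noteq> 0 \<Longrightarrow> a x \<le> a x' + d"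
  shows "a x \<le> a x' + real (card (UNIV :: 'x set)) * d"
proof -
  obtain x0 where min: "\<And>z. a x0 \<le> a z"
    using Min_le[of "range a"] Min_in[of "range a"] by fastforce
  have "0 \<le> d" using rows[of x0] column_spread by force
  define S where "S n = {z. a z \<le> a x0 + real n * d}" for n
  have S_mono: "S n \<subseteq> S (Suc n)" for n
    using \<open>0 \<le> d\<close> by (auto simp: S_def algebra_simps)
  have grow: "S n = UNIV \<or> n + 1 \<le> card (S n)" for n
  proof (induction n)
    case 0
    have "x0 \<in> S 0" by (simp add: S_def)
    then have "S 0 \<noteq> {}" by blast
    then show ?case by (simp add: card_gt_0_iff Suc_le_eq)
  next
    case (Suc n)
    show ?case
    proof (cases "S n = UNIV")
      case True
      then show ?thesis using S_mono[of n] by auto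
    next
      case False
      have "x0 \<in> S n" using \<open>0 \<le> d\<close> by (simp add: S_def)
      then obtain z z' y where z: "z \<notin> S n" "z' \<in> S n" "M z y \<noteq> 0" "M z' y \<noteq> 0"
        using not_decomposes_crossing_column[OF nd rows, of "S n"] False by blast
      then have "z \<in> S (Suc n)"
        using column_spread[of z y z'] by (auto simp: S_def algebra_simps)
      then have "card (insert z (S n)) \<le> card (S (Suc n))"
        using S_mono[of n] by (intro card_mono) auto
      then show ?thesis using Suc.IH False z(1) by simp
    qed
  qed
  have "S (card (UNIV :: 'x set)) = UNIV"
    using grow[of "card (UNIV :: 'x set)"] card_mono[of UNIV "S (card (UNIV :: 'x set))"] by auto
  then have "x \<in> S (card (UNIV :: 'x set))" by blast
  then show ?thesis using min[of x'] by (simp add: S_def)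
qed

locale finite_IB =
  fixes p :: "'x::finite \<Rightarrow> 'y::finite \<Rightarrow> real"
  assumes IB: "IB_problem p"
begin

(* For a column a = q(t|.) of an encoder, joint a y is p(y,t), avg a is p(t) and
   cond_mean a y is p(t|y). *)
definition px :: "'x \<Rightarrow> real" where "px x = (\<Sum>y\<in>UNIV. p x y)"
definition py :: "'y \<Rightarrow> real" where "py y = (\<Sum>x\<in>UNIV. p x y)"
definition avg :: "('x \<Rightarrow> real) \<Rightarrow> real" where "avg a = (\<Sum>x\<in>UNIV. px x * a x)"
definition joint :: "('x \<Rightarrow> real) \<Rightarrow> 'y \<Rightarrow> real" where "joint a y = (\<Sum>x\<in>UNIV. p x y * a x)"
definition cond_mean :: "('x \<Rightarrow> real) \<Rightarrow> 'y \<Rightarrow> real" where "cond_mean a y = joint a y / py y"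

definition info_x :: "('x \<Rightarrow> real) \<Rightarrow> real" where
  "info_x a = (\<Sum>x\<in>UNIV. px x * kl_term (a x) (avg a))"
definition info_y :: "('x \<Rightarrow> real) \<Rightarrow> real" where
  "info_y a = (\<Sum>y\<in>UNIV. kl_term (joint a y) (py y * avg a))"

definition var_x :: "('x \<Rightarrow> real) \<Rightarrow> real" where
  "var_x a = (\<Sum>x\<in>UNIV. px x * (a x - avg a)\<^sup>2)"
definition cond_var :: "('x \<Rightarrow> real) \<Rightarrow> real" where
  "cond_var a = (\<Sum>y\<in>UNIV. \<Sum>x\<in>UNIV. p x y * (a x - cond_mean a y)\<^sup>2)"

lemma p_nonneg: "0 \<le> p x y"
  using IB by (simp add: IB_problem_def)

lemma px_pos: "0 < px x"
  using IB by (simp add: IB_problem_def px_def)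

lemma sum_px: "(\<Sum>x\<in>UNIV. px x) = 1"
  using IB by (simp add: IB_problem_def px_def)

lemma row_nonzero: "\<exists>y. p x y \<noteq> 0"
proof (rule ccontr)
  assume "\<not> (\<exists>y. p x y \<noteq> 0)"
  then show False using px_pos[of x] by (simp add: px_def)
qed

lemma p_le_py: "p x y \<le> py y"
  unfolding py_def by (rule member_le_sum) (auto simp: p_nonneg)

lemma px_mult_le_avg: "(\<And>x. 0 \<le> a x) \<Longrightarrow> px x * a x \<le> avg a"
  unfolding avg_def by (rule member_le_sum) (auto intro: mult_nonneg_nonneg less_imp_le[OF px_pos])

lemma p_mult_le_joint: "(\<And>x. 0 \<le> a x) \<Longrightarrow> p x y * a x \<le> joint a y"
  unfolding joint_def by (rule member_le_sum) (auto intro: mult_nonneg_nonneg p_nonneg)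

lemma avg_nonneg: "(\<And>x. 0 \<le> a x) \<Longrightarrow> 0 \<le> avg a"
  unfolding avg_def by (auto intro!: sum_nonneg mult_nonneg_nonneg less_imp_le[OF px_pos])

lemma joint_nonneg: "(\<And>x. 0 \<le> a x) \<Longrightarrow> 0 \<le> joint a y"
  unfolding joint_def by (auto intro!: sum_nonneg mult_nonneg_nonneg p_nonneg)

lemma cond_mean_nonneg: "(\<And>x. 0 \<le> a x) \<Longrightarrow> 0 \<le> cond_mean a y"
  unfolding cond_mean_def py_def by (auto intro!: divide_nonneg_nonneg joint_nonneg sum_nonneg p_nonneg)

lemma cond_mean_pos:
  assumes "\<And>x. 0 \<le> a x" "p x y \<noteq> 0" "0 < a x"
  shows "0 < cond_mean a y"
proof -
  have "0 < p x y" using assms(2) p_nonneg[of x y] by (simp add: less_le)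
  then have "0 < p x y * a x" using assms(3) by simp
  then have "0 < joint a y" "0 < py y"
    using p_mult_le_joint[of a x y, OF assms(1)] p_le_py[of x y] \<open>0 < p x y\<close> by linarith+
  then show ?thesis by (simp add: cond_mean_def)
qed

lemma py_mult_cond_mean: "py y * cond_mean a y = joint a y"
proof (cases "py y = 0")
  case True
  then have "p x y = 0" for x using p_le_py[of x y] p_nonneg[of x y] by simp
  then show ?thesis using True by (simp add: joint_def)
qed (simp add: cond_mean_def)

lemma sum_px_deviation: "(\<Sum>x\<in>UNIV. px x * (a x - c)) = avg a - c"
  by (simp add: avg_def right_diff_distrib sum_subtractf sum_distrib_right[symmetric] sum_px)

lemma sum_deviation_cond_mean: "(\<Sum>y\<in>UNIV. \<Sum>x\<in>UNIV. p x y * (a x - cond_mean a y)) = 0"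
  by (simp add: right_diff_distrib sum_subtractf sum_distrib_right[symmetric] py_mult_cond_mean
      flip: joint_def py_def)

lemma encoder_nonneg: "encoder k q \<Longrightarrow> 0 \<le> q x t"
  by (simp add: encoder_def)

lemma IXT_eq_sum_info_x:
  assumes q: "encoder k q"
  shows "IXT p k q = (\<Sum>t<k. info_x (\<lambda>x. q x t))"
proof -
  have rows: "(\<Sum>t<k. px x * q x t) = px x" for x
    using q by (simp add: encoder_def flip: sum_distrib_left)
  have "IXT p k q = (\<Sum>x\<in>UNIV. \<Sum>t<k. kl_term (px x * q x t) (px x * avg (\<lambda>x. q x t)))"
    unfolding IXT_def mutual_info_eq_kl_term by (simp add: rows avg_def flip: px_def)
  also have "\<dots> = (\<Sum>x\<in>UNIV. \<Sum>t<k. px x * kl_term (q x t) (avg (\<lambda>x. q x t)))"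
    by (simp add: kl_term_mult less_imp_le[OF px_pos])
  also have "\<dots> = (\<Sum>t<k. info_x (\<lambda>x. q x t))"
    unfolding info_x_def by (rule sum.swap)
  finally show ?thesis .
qed

lemma IYT_eq_sum_info_y:
  assumes q: "encoder k q"
  shows "IYT p k q = (\<Sum>t<k. info_y (\<lambda>x. q x t))"
proof -
  have rows: "(\<Sum>t<k. joint (\<lambda>x. q x t) y) = py y" for y
    using q unfolding joint_def py_def encoder_def
    by (subst sum.swap) (simp flip: sum_distrib_left)
  have cols: "(\<Sum>y\<in>UNIV. joint (\<lambda>x. q x t) y) = avg (\<lambda>x. q x t)" for t
    unfolding joint_def avg_def px_def by (subst sum.swap) (simp add: sum_distrib_right)
  have "IYT p k q = (\<Sum>y\<in>UNIV. \<Sum>t<k. kl_term (joint (\<lambda>x. q x t) y) (py y * avg (\<lambda>x. q x t)))"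
    unfolding IYT_def mutual_info_eq_kl_term by (simp add: rows cols flip: joint_def)
  also have "\<dots> = (\<Sum>t<k. info_y (\<lambda>x. q x t))"
    unfolding info_y_def by (rule sum.swap)
  finally show ?thesis .
qed

lemma info_x_eq_double_sum:
  "info_x a = (\<Sum>y\<in>UNIV. \<Sum>x\<in>UNIV. p x y * kl_term (a x) (avg a))"
  unfolding info_x_def px_def by (subst sum.swap) (simp add: sum_distrib_right)

lemma info_y_eq_double_sum:
  assumes a: "\<And>x. 0 \<le> a x"
  shows "info_y a = (\<Sum>y\<in>UNIV. \<Sum>x\<in>UNIV. p x y * a x * ln (cond_mean a y / avg a))"
  unfolding info_y_def
proof (rule sum.cong[OF refl])
  fix y
  show "kl_term (joint a y) (py y * avg a) = (\<Sum>x\<in>UNIV. p x y * a x * ln (cond_mean a y / avg a))"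
  proof (cases "joint a y = 0")
    case True
    then have "p x y * a x = 0" for x
      using p_mult_le_joint[of a x y, OF a] mult_nonneg_nonneg[OF p_nonneg[of x y] a[of x]]
      by linarith
    then show ?thesis using True by (simp add: sum.neutral)
  next
    case False
    then have "py y \<noteq> 0" using py_mult_cond_mean[of y a] by auto
    then have "joint a y / (py y * avg a) = cond_mean a y / avg a"
      by (simp add: cond_mean_def)
    then show ?thesis using False
      by (simp add: kl_term_def joint_def sum_distrib_right)
  qed
qed

lemma info_gap_eq:
  assumes a: "\<And>x. 0 \<le> a x"
  shows "info_x a - info_y a = (\<Sum>y\<in>UNIV. \<Sum>x\<in>UNIV. p x y * kl_term (a x) (cond_mean a y))"
  unfolding info_x_eq_double_sum info_y_eq_double_sum[OF a] sum_subtractf[symmetric]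
proof (intro sum.cong refl)
  fix x y
  show "p x y * kl_term (a x) (avg a) - p x y * a x * ln (cond_mean a y / avg a)
      = p x y * kl_term (a x) (cond_mean a y)"
  proof (cases "p x y = 0 \<or> a x = 0")
    case False
    then have "0 < a x" using a[of x] by (simp add: less_le)
    moreover have "0 < px x * a x" using px_pos[of x] \<open>0 < a x\<close> by simp
    ultimately have "0 < cond_mean a y" "0 < avg a"
      using cond_mean_pos[of a, OF a] False px_mult_le_avg[of a x, OF a] by auto
    then show ?thesis using \<open>0 < a x\<close>
      by (simp add: kl_term_def ln_div algebra_simps)
  qed auto
qed

lemma p_mult_deviation_le_kl_term:
  assumes a: "\<And>x. 0 \<le> a x"
  shows "p x y * (a x - cond_mean a y) \<le> p x y * kl_term (a x) (cond_mean a y)"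
proof (cases "p x y = 0")
  case False
  then show ?thesis
    using cond_mean_pos[of a, OF a False] a[of x]
    by (intro mult_left_mono kl_term_ge_diff a cond_mean_nonneg p_nonneg) (auto simp: less_le)
qed simp

lemma info_y_le_info_x:
  assumes a: "\<And>x. 0 \<le> a x"
  shows "info_y a \<le> info_x a"
proof -
  have "0 = (\<Sum>y\<in>UNIV. \<Sum>x\<in>UNIV. p x y * (a x - cond_mean a y))"
    by (simp add: sum_deviation_cond_mean)
  also have "\<dots> \<le> info_x a - info_y a"
    unfolding info_gap_eq[OF a] by (intro sum_mono p_mult_deviation_le_kl_term a)
  finally show ?thesis by simp
qed

lemma info_x_nonneg:
  assumes a: "\<And>x. 0 \<le> a x"
  shows "0 \<le> info_x a"
proof -
  have "0 = (\<Sum>x\<in>UNIV. px x * (a x - avg a))"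
    by (simp add: sum_px_deviation)
  also have "\<dots> \<le> info_x a"
    unfolding info_x_def
  proof (intro sum_mono mult_left_mono kl_term_ge_diff a less_imp_le[OF px_pos])
    fix x
    show "0 \<le> avg a" by (rule avg_nonneg[OF a])
    show "avg a = 0 \<Longrightarrow> a x = 0"
      using px_mult_le_avg[of a x, OF a] px_pos[of x] a[of x] by (simp add: mult_le_0_iff)
  qed
  finally show ?thesis .
qed

lemma info_x_le_var_x:
  assumes a: "\<And>x. 0 \<le> a x" and "0 < avg a"
  shows "info_x a \<le> var_x a / avg a"
proof -
  have "info_x a \<le> (\<Sum>x\<in>UNIV. px x * ((a x - avg a)\<^sup>2 / avg a + (a x - avg a)))"
    unfolding info_x_def
    by (intro sum_mono mult_left_mono kl_term_le_chi_square a assms(2) less_imp_le[OF px_pos])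
  also have "\<dots> = var_x a / avg a"
    by (simp add: var_x_def distrib_left sum.distrib sum_px_deviation sum_divide_distrib)
  finally show ?thesis .
qed

lemma cond_var_le_info_gap:
  assumes a: "\<And>x. 0 \<le> a x" and bound: "\<And>x. a x \<le> M" and "0 < M"
  shows "cond_var a / (4 * M) \<le> info_x a - info_y a"
proof -
  have cond_mean_le: "cond_mean a y \<le> M" for y
  proof -
    have "joint a y \<le> (\<Sum>x\<in>UNIV. p x y * M)"
      unfolding joint_def by (intro sum_mono mult_left_mono bound p_nonneg)
    also have "\<dots> = py y * M"
      by (simp add: py_def sum_distrib_right)
    finally have "joint a y \<le> py y * M" .
    moreover have "0 \<le> py y"
      using p_le_py p_nonneg order_trans by blast
    ultimately show ?thesis
      using \<open>0 < M\<close> by (cases "py y = 0") (auto simp: cond_mean_def divide_le_eq mult.commute)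
  qed
  have "cond_var a / (4 * M)
      = (\<Sum>y\<in>UNIV. \<Sum>x\<in>UNIV. p x y * (a x - cond_mean a y)) + cond_var a / (4 * M)"
    by (simp add: sum_deviation_cond_mean)
  also have "\<dots> = (\<Sum>y\<in>UNIV. \<Sum>x\<in>UNIV. p x y *
      (a x - cond_mean a y + (a x - cond_mean a y)\<^sup>2 / (4 * M)))"
    by (simp add: cond_var_def distrib_left sum.distrib sum_divide_distrib)
  also have "\<dots> \<le> info_x a - info_y a"
    unfolding info_gap_eq[OF a]
  proof (intro sum_mono)
    fix x y
    show "p x y * (a x - cond_mean a y + (a x - cond_mean a y)\<^sup>2 / (4 * M))
        \<le> p x y * kl_term (a x) (cond_mean a y)"
    proof (cases "p x y = 0")
      case False
      then show ?thesis
        using cond_mean_pos[of a, OF a False] a[of x]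
        by (intro mult_left_mono kl_term_ge_diff_plus_square a cond_mean_nonneg bound
            cond_mean_le p_nonneg) (auto simp: less_le)
    qed simp
  qed
  finally show ?thesis .
qed

definition p_min :: real where "p_min = Min (range (case_prod p) - {0})"
definition px_min :: real where "px_min = Min (range px)"

lemma p_min_le: "p x y \<noteq> 0 \<Longrightarrow> p_min \<le> p x y"
  unfolding p_min_def by (rule Min_le) (auto intro: image_eqI[of _ _ "(x, y)"])

lemma p_min_pos: "0 < p_min"
proof -
  obtain x y where "p x y \<noteq> 0" using row_nonzero by blast
  then have "range (case_prod p) - {0} \<noteq> {}" by (auto intro: image_eqI[of _ _ "(x, y)"])
  then have "p_min \<in> range (case_prod p) - {0}"
    unfolding p_min_def by (intro Min_in) auto
  then show ?thesis using p_nonneg by (auto simp: less_le)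
qed

lemma px_min_le: "px_min \<le> px x"
  unfolding px_min_def by (rule Min_le) auto

lemma px_min_pos: "0 < px_min"
proof -
  have "px_min \<in> range px" unfolding px_min_def by (intro Min_in) auto
  then show ?thesis using px_pos by auto
qed

lemma sq_deviation_cond_mean_le:
  assumes "p x y \<noteq> 0"
  shows "p_min * (a x - cond_mean a y)\<^sup>2 \<le> cond_var a"
proof -
  have "p_min * (a x - cond_mean a y)\<^sup>2 \<le> p x y * (a x - cond_mean a y)\<^sup>2"
    using p_min_le[OF assms] by (intro mult_right_mono) auto
  also have "\<dots> \<le> (\<Sum>x\<in>UNIV. p x y * (a x - cond_mean a y)\<^sup>2)"
    by (rule member_le_sum) (auto intro: mult_nonneg_nonneg p_nonneg)
  also have "\<dots> \<le> cond_var a"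
    unfolding cond_var_def by (rule member_le_sum) (auto intro!: sum_nonneg mult_nonneg_nonneg p_nonneg)
  finally show ?thesis .
qed

lemma abs_deviation_avg_le:
  assumes "\<And>x x'. a x \<le> a x' + d"
  shows "\<bar>a x - avg a\<bar> \<le> d"
proof -
  have "avg a - a x = (\<Sum>x'\<in>UNIV. px x' * (a x' - a x))"
    by (simp add: sum_px_deviation)
  also have "\<dots> \<le> (\<Sum>x'\<in>UNIV. px x' * d)"
    using assms by (intro sum_mono mult_left_mono) (auto intro: less_imp_le[OF px_pos] simp: algebra_simps)
  finally have "avg a - a x \<le> d" by (simp add: sum_px flip: sum_distrib_right)
  have "a x - avg a = (\<Sum>x'\<in>UNIV. px x' * (a x - a x'))"
    by (simp add: right_diff_distrib sum_subtractf sum_px avg_def flip: sum_distrib_right)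
  also have "\<dots> \<le> (\<Sum>x'\<in>UNIV. px x' * d)"
    using assms by (intro sum_mono mult_left_mono) (auto intro: less_imp_le[OF px_pos] simp: algebra_simps)
  finally have "a x - avg a \<le> d" by (simp add: sum_px flip: sum_distrib_right)
  with \<open>avg a - a x \<le> d\<close> show ?thesis by linarith
qed

lemma var_x_le_cond_var:
  assumes nd: "\<not> decomposes p"
  shows "var_x a \<le> 4 * (real (card (UNIV :: 'x set)))\<^sup>2 / p_min * cond_var a"
proof -
  define N where "N = real (card (UNIV :: 'x set))"
  define \<delta> where "\<delta> = sqrt (cond_var a / p_min)"
  have near: "\<bar>a x - cond_mean a y\<bar> \<le> \<delta>" if "p x y \<noteq> 0" for x y
  proof -
    have "(a x - cond_mean a y)\<^sup>2 \<le> cond_var a / p_min"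
      using sq_deviation_cond_mean_le[OF that] p_min_pos by (simp add: le_divide_eq mult.commute)
    then show ?thesis unfolding \<delta>_def using real_sqrt_le_mono by fastforce
  qed
  have "a x \<le> a x' + 2 * \<delta>" if "p x y \<noteq> 0" "p x' y \<noteq> 0" for x x' y
    using near[OF that(1)] near[OF that(2)] by (simp add: abs_le_iff)
  then have "a x \<le> a x' + N * (2 * \<delta>)" for x x'
    unfolding N_def by (rule not_decomposes_spread[OF nd row_nonzero])
  then have "(a x - avg a)\<^sup>2 \<le> (N * (2 * \<delta>))\<^sup>2" for x
    using abs_deviation_avg_le by (metis abs_ge_zero power2_abs power_mono)
  also have "(N * (2 * \<delta>))\<^sup>2 = 4 * N\<^sup>2 / p_min * cond_var a"
    unfolding \<delta>_def using p_min_pos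
    by (simp add: power_mult_distrib cond_var_def sum_nonneg p_nonneg)
  finally have "var_x a \<le> (\<Sum>x\<in>UNIV. px x * (4 * N\<^sup>2 / p_min * cond_var a))"
    unfolding var_x_def by (intro sum_mono mult_left_mono) (auto intro: less_imp_le[OF px_pos])
  also have "\<dots> = 4 * N\<^sup>2 / p_min * cond_var a"
    by (simp only: sum_px flip: sum_distrib_right)
  finally show ?thesis by (simp add: N_def)
qed

lemma info_gap_ge_info_x:
  assumes nd: "\<not> decomposes p" and a: "\<And>x. 0 \<le> a x"
  shows "p_min * px_min / (16 * (real (card (UNIV :: 'x set)))\<^sup>2) * info_x a
    \<le> info_x a - info_y a"
proof (cases "avg a = 0")
  case True
  then have "a x = 0" for x
    using px_mult_le_avg[of a x, OF a] px_pos[of x] a[of x] by (simp add: mult_le_0_iff)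
  then have "info_x a = 0" by (simp add: info_x_def)
  then show ?thesis using info_y_le_info_x[of a, OF a] by simp
next
  case False
  then have avg_pos: "0 < avg a" using avg_nonneg[of a, OF a] by simp
  define N where "N = real (card (UNIV :: 'x set))"
  define M where "M = avg a / px_min"
  have bound: "a x \<le> M" for x
  proof -
    have "px_min * a x \<le> px x * a x" using px_min_le a by (rule mult_right_mono)
    then show ?thesis
      using px_mult_le_avg[of a x, OF a] px_min_pos by (simp add: M_def le_divide_eq mult.commute)
  qed
  have "0 < N" by (simp add: N_def card_gt_0_iff)
  define c where "c = p_min * px_min / (16 * N\<^sup>2)"
  have "info_x a \<le> var_x a / avg a"
    by (rule info_x_le_var_x[of a, OF a avg_pos])
  also have "\<dots> \<le> 4 * N\<^sup>2 / p_min * cond_var a / avg a"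
    using divide_right_mono[OF var_x_le_cond_var[OF nd, of a], of "avg a"] avg_pos
    by (simp add: N_def)
  finally have "c * info_x a \<le> c * (4 * N\<^sup>2 / p_min * cond_var a / avg a)"
    using p_min_pos px_min_pos by (intro mult_left_mono) (auto simp: c_def)
  also have "\<dots> = cond_var a / (4 * M)"
    using p_min_pos px_min_pos avg_pos \<open>0 < N\<close> by (simp add: c_def M_def field_simps power2_eq_square)
  also have "\<dots> \<le> info_x a - info_y a"
    using cond_var_le_info_gap[of a, OF a bound] avg_pos px_min_pos by (simp add: M_def)
  finally show ?thesis by (simp add: c_def N_def)
qed

lemma IYT_le_contraction:
  assumes "\<not> decomposes p"
  obtains c where "0 < c" "c \<le> 1" "\<And>k q. encoder k q \<Longrightarrow> IYT p k q \<le> (1 - c) * IXT p k q"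
proof -
  define c where "c = min 1 (p_min * px_min / (16 * (real (card (UNIV :: 'x set)))\<^sup>2))"
  have "0 < c" "c \<le> 1"
    using p_min_pos px_min_pos by (auto simp: c_def card_gt_0_iff)
  have gap: "c * info_x a \<le> info_x a - info_y a" if a: "\<And>x. 0 \<le> a x" for a
  proof -
    have "c * info_x a \<le> p_min * px_min / (16 * (real (card (UNIV :: 'x set)))\<^sup>2) * info_x a"
      using info_x_nonneg[of a, OF a] by (intro mult_right_mono) (auto simp: c_def)
    also have "\<dots> \<le> info_x a - info_y a"
      by (rule info_gap_ge_info_x[of a, OF assms a])
    finally show ?thesis .
  qed
  have "IYT p k q \<le> (1 - c) * IXT p k q" if "encoder k q" for k q
    unfolding IXT_eq_sum_info_x[OF that] IYT_eq_sum_info_y[OF that] sum_distrib_left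
    using gap[of "\<lambda>x. q x t" for t] encoder_nonneg[OF that]
    by (intro sum_mono) (simp add: algebra_simps)
  with \<open>0 < c\<close> \<open>c \<le> 1\<close> that show ?thesis by blast
qed

lemma avg_mult: "avg (\<lambda>x. l * a x) = l * avg a"
  by (simp add: avg_def sum_distrib_left algebra_simps)

lemma joint_mult: "joint (\<lambda>x. l * a x) y = l * joint a y"
  by (simp add: joint_def sum_distrib_left algebra_simps)

lemma info_x_mult: "0 \<le> l \<Longrightarrow> info_x (\<lambda>x. l * a x) = l * info_x a"
  by (simp add: info_x_def avg_mult kl_term_mult sum_distrib_left algebra_simps)

lemma info_y_mult: "0 \<le> l \<Longrightarrow> info_y (\<lambda>x. l * a x) = l * info_y a"
proof -
  assume "0 \<le> l"
  then have "kl_term (l * joint a y) (py y * (l * avg a)) = l * kl_term (joint a y) (py y * avg a)" for y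
    using kl_term_mult[of l "joint a y" "py y * avg a"] by (simp add: algebra_simps)
  then show ?thesis by (simp add: info_y_def avg_mult joint_mult sum_distrib_left)
qed

lemma avg_const [simp]: "avg (\<lambda>_. c) = c"
  by (simp add: avg_def sum_px flip: sum_distrib_right)

lemma joint_const [simp]: "joint (\<lambda>_. c) y = py y * c"
  by (simp add: joint_def py_def sum_distrib_right)

lemma info_x_const [simp]: "info_x (\<lambda>_. c) = 0"
  by (simp add: info_x_def)

lemma info_y_const [simp]: "info_y (\<lambda>_. c) = 0"
  by (simp add: info_y_def)

lemma IYT_le_IXT: "encoder k q \<Longrightarrow> IYT p k q \<le> IXT p k q"
  by (simp add: IXT_eq_sum_info_x IYT_eq_sum_info_y sum_mono info_y_le_info_x encoder_nonneg)

lemma encoder_const: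
  "encoder 1 (\<lambda>_ _. 1)" "IXT p 1 (\<lambda>_ _. 1) = 0" "IYT p 1 (\<lambda>_ _. 1) = 0"
proof -
  show enc: "encoder 1 (\<lambda>_ _. 1)" by (simp add: encoder_def)
  show "IXT p 1 (\<lambda>_ _. 1) = 0" unfolding IXT_eq_sum_info_x[OF enc] by simp
  show "IYT p 1 (\<lambda>_ _. 1) = 0" unfolding IYT_eq_sum_info_y[OF enc] by simp
qed

lemma encoder_erasure:
  assumes q: "encoder k q" and "0 \<le> l" "l \<le> 1"
  obtains q' where "encoder (Suc k) q'"
    "IXT p (Suc k) q' = l * IXT p k q" "IYT p (Suc k) q' = l * IYT p k q"
proof
  define q' where "q' x t = (if t < k then l * q x t else 1 - l)" for x t
  show enc: "encoder (Suc k) q'"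
    using q assms by (auto simp: encoder_def q'_def encoder_nonneg simp flip: sum_distrib_left)
  have cols: "(\<lambda>x. q' x t) = (\<lambda>x. l * q x t)" if "t < k" for t
    using that by (simp add: q'_def)
  show "IXT p (Suc k) q' = l * IXT p k q"
    using assms by (simp add: IXT_eq_sum_info_x[OF enc] IXT_eq_sum_info_x[OF q] cols info_x_mult
        q'_def sum_distrib_left)
  show "IYT p (Suc k) q' = l * IYT p k q"
    using assms by (simp add: IYT_eq_sum_info_y[OF enc] IYT_eq_sum_info_y[OF q] cols info_y_mult
        q'_def sum_distrib_left)
qed

lemma IB_curve_ge:
  assumes "encoder k q" "IXT p k q \<le> IX"
  shows "IYT p k q \<le> IB_curve p IX"
  unfolding IB_curve_def
proof (rule cSup_upper)
  show "bdd_above {IYT p k q |k q. encoder k q \<and> IXT p k q \<le> IX}"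
    by (rule bdd_aboveI[of _ IX]) (auto dest: IYT_le_IXT)
qed (use assms in blast)

lemma IB_curve_le_bound:
  assumes "0 \<le> IX" "\<And>k q. encoder k q \<Longrightarrow> IXT p k q \<le> IX \<Longrightarrow> IYT p k q \<le> z"
  shows "IB_curve p IX \<le> z"
  unfolding IB_curve_def
proof (rule cSup_least)
  show "{IYT p k q |k q. encoder k q \<and> IXT p k q \<le> IX} \<noteq> {}"
    using encoder_const assms(1) by force
qed (use assms(2) in blast)

lemma IB_curve_le: "0 \<le> IX \<Longrightarrow> IB_curve p IX \<le> IX"
  by (rule IB_curve_le_bound) (auto dest: IYT_le_IXT)

lemma IB_curve_nonneg: "0 \<le> IX \<Longrightarrow> 0 \<le> IB_curve p IX"
  using IB_curve_ge[OF encoder_const(1)] encoder_const by simp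

lemma IB_curve_mult_le:
  assumes "0 \<le> l" "l \<le> 1" "0 \<le> IX"
  shows "l * IB_curve p IX \<le> IB_curve p (l * IX)"
proof (cases "l = 0")
  case True
  then show ?thesis by (simp add: IB_curve_nonneg)
next
  case False
  have "IB_curve p IX \<le> IB_curve p (l * IX) / l"
  proof (rule IB_curve_le_bound[OF assms(3)])
    fix k q assume q: "encoder k q" "IXT p k q \<le> IX"
    obtain q' where q': "encoder (Suc k) q'"
      "IXT p (Suc k) q' = l * IXT p k q" "IYT p (Suc k) q' = l * IYT p k q"
      using encoder_erasure[OF q(1) assms(1,2)] .
    have "IXT p (Suc k) q' \<le> l * IX"
      using q(2) assms(1) by (simp add: q'(2) mult_left_mono)
    then have "l * IYT p k q \<le> IB_curve p (l * IX)"
      using IB_curve_ge[OF q'(1)] q'(3) by simp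
    then show "IYT p k q \<le> IB_curve p (l * IX) / l"
      using False assms(1) by (simp add: le_divide_eq mult.commute)
  qed
  then show ?thesis
    using False assms(1) by (simp add: le_divide_eq mult.commute)
qed

lemma IB_curve_eq_self:
  assumes q: "encoder k q" "IYT p k q = IXT p k q" and "0 \<le> IX" "IX \<le> IXT p k q"
  shows "IB_curve p IX = IX"
proof (rule antisym)
  show "IB_curve p IX \<le> IX" using IB_curve_le[OF assms(3)] .
  define l where "l = IX / IXT p k q"
  have l: "0 \<le> l" "l \<le> 1" "IX = l * IXT p k q"
    using assms(3,4) by (auto simp: l_def divide_le_eq_1)
  have "IX \<le> l * IB_curve p (IXT p k q)"
    using IB_curve_ge[OF q(1) order_refl] q(2) l by (simp add: mult_left_mono)
  also have "\<dots> \<le> IB_curve p IX"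
    using IB_curve_mult_le[OF l(1,2)] assms(3,4) l(3) by simp
  finally show "IX \<le> IB_curve p IX" .
qed

lemma info_y_eq_info_x:
  assumes a: "\<And>x. 0 \<le> a x" and "\<And>x y. p x y \<noteq> 0 \<Longrightarrow> cond_mean a y = a x"
  shows "info_y a = info_x a"
proof -
  have gap_terms: "p x y * kl_term (a x) (cond_mean a y) = 0" for x y
    using assms(2)[of x y] by (cases "p x y = 0") auto
  show ?thesis using info_gap_eq[of a, OF a] by (simp add: gap_terms)
qed

lemma cond_mean_indicator:
  assumes S: "\<And>x x' y. p x y \<noteq> 0 \<Longrightarrow> p x' y \<noteq> 0 \<Longrightarrow> x \<in> S \<longleftrightarrow> x' \<in> S"
    and "p x y \<noteq> 0"
  shows "cond_mean (\<lambda>x. of_bool (x \<in> S)) y = of_bool (x \<in> S)"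
proof -
  have "joint (\<lambda>x. of_bool (x \<in> S)) y = (\<Sum>x'\<in>UNIV. p x' y * of_bool (x \<in> S))"
    unfolding joint_def
  proof (rule sum.cong[OF refl])
    fix x'
    show "p x' y * of_bool (x' \<in> S) = p x' y * of_bool (x \<in> S)"
      using S[OF assms(2), of x'] by (cases "p x' y = 0") auto
  qed
  also have "\<dots> = py y * of_bool (x \<in> S)"
    by (simp only: py_def sum_distrib_right)
  finally have "joint (\<lambda>x. of_bool (x \<in> S)) y = py y * of_bool (x \<in> S)" .
  moreover have "0 < py y"
    using p_le_py[of x y] p_nonneg[of x y] assms(2) by linarith
  ultimately show ?thesis by (simp add: cond_mean_def)
qed

lemma info_y_indicator:
  assumes S: "\<And>x x' y. p x y \<noteq> 0 \<Longrightarrow> p x' y \<noteq> 0 \<Longrightarrow> x \<in> S \<longleftrightarrow> x' \<in> S"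
  shows "info_y (\<lambda>x. of_bool (x \<in> S)) = info_x (\<lambda>x. of_bool (x \<in> S))"
  by (rule info_y_eq_info_x) (simp_all add: cond_mean_indicator[OF S])

lemma info_x_indicator_pos:
  assumes "A \<noteq> {}" "A \<noteq> UNIV"
  shows "0 < info_x (\<lambda>x. of_bool (x \<in> A))"
proof -
  define h where "h = avg (\<lambda>x. of_bool (x \<in> A))"
  obtain x0 x1 where "x0 \<in> A" "x1 \<notin> A" using assms by blast
  have "0 < h"
    using px_mult_le_avg[of "\<lambda>x. of_bool (x \<in> A)" x0] px_pos[of x0] \<open>x0 \<in> A\<close> by (simp add: h_def)
  moreover have "h < 1"
  proof -
    have "(\<lambda>x. of_bool (x \<notin> A)) = (\<lambda>x. 1 - of_bool (x \<in> A) :: real)"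
      by auto
    then have "avg (\<lambda>x. of_bool (x \<notin> A)) = 1 - h"
      by (simp add: h_def avg_def right_diff_distrib sum_subtractf sum_px)
    moreover have "0 < avg (\<lambda>x. of_bool (x \<notin> A))"
      using px_mult_le_avg[of "\<lambda>x. of_bool (x \<notin> A)" x1] px_pos[of x1] \<open>x1 \<notin> A\<close> by simp
    ultimately show ?thesis by linarith
  qed
  moreover have "info_x (\<lambda>x. of_bool (x \<in> A)) = h * ln (1 / h)"
  proof -
    have terms: "px x * kl_term (of_bool (x \<in> A)) h = px x * of_bool (x \<in> A) * ln (1 / h)" for x
      by (simp add: kl_term_def)
    have "info_x (\<lambda>x. of_bool (x \<in> A)) = (\<Sum>x\<in>UNIV. px x * of_bool (x \<in> A) * ln (1 / h))"
      unfolding info_x_def h_def[symmetric] terms ..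
    also have "\<dots> = h * ln (1 / h)"
      by (simp only: h_def avg_def sum_distrib_right)
    finally show ?thesis .
  qed
  ultimately show ?thesis using ln_less_zero[of h] by (simp add: ln_div mult_pos_neg)
qed

lemma decomposes_imp_linear_segment:
  assumes "decomposes p"
  shows "has_linear_segment_beta1 p"
proof -
  obtain A B where A: "A \<noteq> {}" "A \<noteq> UNIV" and AB: "\<And>x y. p x y \<noteq> 0 \<Longrightarrow> x \<in> A \<longleftrightarrow> y \<in> B"
    using assms unfolding decomposes_def by blast
  have A_cols: "\<And>x x' y. p x y \<noteq> 0 \<Longrightarrow> p x' y \<noteq> 0 \<Longrightarrow> x \<in> A \<longleftrightarrow> x' \<in> A"
    using AB by blast
  then have nA_cols: "\<And>x x' y. p x y \<noteq> 0 \<Longrightarrow> p x' y \<noteq> 0 \<Longrightarrow> x \<in> -A \<longleftrightarrow> x' \<in> -A"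
    by blast
  define q :: "'x \<Rightarrow> nat \<Rightarrow> real" where "q x t = of_bool (x \<in> A \<longleftrightarrow> t = 0)" for x t
  have q: "encoder 2 q"
    by (simp add: encoder_def q_def numeral_2_eq_2)
  have cols: "(\<lambda>x. q x 0) = (\<lambda>x. of_bool (x \<in> A))" "(\<lambda>x. q x (Suc 0)) = (\<lambda>x. of_bool (x \<in> -A))"
    by (auto simp: q_def)
  have IXT: "IXT p 2 q = info_x (\<lambda>x. of_bool (x \<in> A)) + info_x (\<lambda>x. of_bool (x \<in> -A))"
    unfolding IXT_eq_sum_info_x[OF q] by (simp add: numeral_2_eq_2 cols)
  have IYT: "IYT p 2 q = info_y (\<lambda>x. of_bool (x \<in> A)) + info_y (\<lambda>x. of_bool (x \<in> -A))"
    unfolding IYT_eq_sum_info_y[OF q] by (simp add: numeral_2_eq_2 cols)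
  have "IYT p 2 q = IXT p 2 q"
    unfolding IXT IYT
    using info_y_indicator[OF A_cols] info_y_indicator[OF nA_cols] by simp
  moreover have "0 < IXT p 2 q"
    unfolding IXT using info_x_indicator_pos[OF A] info_x_nonneg[of "\<lambda>x. of_bool (x \<in> -A)"]
    by simp
  ultimately have "\<forall>IX\<in>{0..IXT p 2 q}. IB_curve p IX = IB_curve p 0 + (IX - 0)"
    using IB_curve_eq_self[OF q] by simp
  with \<open>0 < IXT p 2 q\<close> show ?thesis
    unfolding has_linear_segment_beta1_def by (meson order_refl)
qed

lemma linear_segment_imp_decomposes:
  assumes "has_linear_segment_beta1 p"
  shows "decomposes p"
proof (rule ccontr)
  assume "\<not> decomposes p"
  then obtain c where c: "0 < c" "c \<le> 1"
    and contraction: "\<And>k q. encoder k q \<Longrightarrow> IYT p k q \<le> (1 - c) * IXT p k q"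
    using IYT_le_contraction by blast
  obtain a b where ab: "0 \<le> a" "a < b"
    and segment: "\<forall>IX\<in>{a..b}. IB_curve p IX = IB_curve p a + (IX - a)"
    using assms unfolding has_linear_segment_beta1_def by blast
  have "b \<in> {a..b}" using ab by simp
  with segment have affine: "IB_curve p b = IB_curve p a + (b - a)" by blast
  have upper: "IB_curve p b \<le> (1 - c) * b"
  proof (rule IB_curve_le_bound)
    show "0 \<le> b" using ab by simp
    fix k q assume "encoder k q" "IXT p k q \<le> b"
    then show "IYT p k q \<le> (1 - c) * b"
      using contraction[of k q] mult_left_mono[of "IXT p k q" b "1 - c"] c(2) by linarith
  qed
  have "a / b * IB_curve p b \<le> IB_curve p a"
    using IB_curve_mult_le[of "a / b" b] ab by simp
  then have "a * IB_curve p b \<le> b * IB_curve p a"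
    using ab by (simp add: field_simps)
  also have "\<dots> = b * IB_curve p b - b * (b - a)"
    by (simp add: affine algebra_simps)
  finally have "(b - a) * b \<le> (b - a) * IB_curve p b"
    by (simp add: algebra_simps)
  then have "b \<le> IB_curve p b"
    using ab by simp
  moreover have "0 < c * b"
    using c ab by simp
  ultimately show False
    using upper by (simp add: left_diff_distrib)
qed

end

theorem theorem3:
  fixes p :: "'x::finite \<Rightarrow> 'y::finite \<Rightarrow> real"
  assumes "IB_problem p"
  shows "has_linear_segment_beta1 p \<longleftrightarrow> decomposes p"
proof -
  interpret finite_IB p by unfold_locales (rule assms)
  show ?thesis
    using decomposes_imp_linear_segment linear_segment_imp_decomposes by blast
qed

end
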